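(* Let $H_1$ and $H_2$ be simple, undirected, connected graphs on the same vertex set $V$, each of girth at least $6$, such that $H_1^2 = H_2^2$ (equal as graphs on $V$). Then $H_1$ and $H_2$ are isomorphic.
   Context: For a simple, undirected, connected graph $H$, its square $H^2$ is the graph on the same vertex set in which two distinct vertices are adjacent if and only if their distance in $H$ is at most $2$. The girth of a graph is the length of its shortest cycle ($\infty$ for a tree). *)

theory Defs
  imports Main "HOL-Library.Extended_Nat"
begin

definition simple_graph :: "'a set \<Rightarrow> ('a \<Rightarrow> 'a \<Rightarrow> bool) \<Rightarrow> bool" where
  "simple_graph V E \<longleftrightarrow>
     (\<forall>x y. E x y \<longrightarrow> x \<in> V \<and> y \<in> V) \<and>
     (\<forall>x y. E x y \<longrightarrow> E y x) \<and>
     (\<forall>x. \<not> E x x)"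

definition connected_graph :: "'a set \<Rightarrow> ('a \<Rightarrow> 'a \<Rightarrow> bool) \<Rightarrow> bool" where
  "connected_graph V E \<longleftrightarrow> V \<noteq> {} \<and> (\<forall>x\<in>V. \<forall>y\<in>V. E\<^sup>*\<^sup>* x y)"

definition graph_square :: "('a \<Rightarrow> 'a \<Rightarrow> bool) \<Rightarrow> 'a \<Rightarrow> 'a \<Rightarrow> bool" where
  "graph_square E x y \<longleftrightarrow> x \<noteq> y \<and> (E x y \<or> (\<exists>z. E x z \<and> E z y))"

definition is_cycle :: "('a \<Rightarrow> 'a \<Rightarrow> bool) \<Rightarrow> 'a list \<Rightarrow> bool" where
  "is_cycle E cs \<longleftrightarrow> length cs \<ge> 3 \<and> distinct cs \<and>
     (\<forall>i < length cs. E (cs ! i) (cs ! ((i + 1) mod length cs)))"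

text \<open>Girth: length of a shortest cycle, \<infinity> if there is none.\<close>
definition girth :: "('a \<Rightarrow> 'a \<Rightarrow> bool) \<Rightarrow> enat" where
  "girth E = (INF cs \<in> {cs. is_cycle E cs}. enat (length cs))"

definition graph_iso :: "'a set \<Rightarrow> ('a \<Rightarrow> 'a \<Rightarrow> bool) \<Rightarrow> ('a \<Rightarrow> 'a \<Rightarrow> bool) \<Rightarrow> bool" where
  "graph_iso V E1 E2 \<longleftrightarrow>
     (\<exists>f. bij_betw f V V \<and> (\<forall>x\<in>V. \<forall>y\<in>V. E1 x y \<longleftrightarrow> E2 (f x) (f y)))"

end

theory Submission
  imports Defs
begin

text \<open>
  Let \<open>G\<close> be the common square. In a graph of girth at least 6, the vertices \<open>G\<close>-adjacent to
  both ends of an edge \<open>uv\<close> are exactly the other neighbours of \<open>u\<close> and of \<open>v\<close>, and two of them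
  are \<open>G\<close>-adjacent iff they are neighbours of the same end. So an edge \<open>uv\<close> common to \<open>H\<^sub>1\<close>
  and \<open>H\<^sub>2\<close> induces the same bipartition of these vertices in both graphs: either \<open>u\<close> has the
  same neighbours in both graphs, or the \<open>H\<^sub>2\<close>-neighbours of \<open>u\<close> are the \<open>H\<^sub>1\<close>-neighbours of
  \<open>v\<close>. Agreement at one vertex propagates along edges, so in the first case \<open>H\<^sub>1 = H\<^sub>2\<close> by
  connectedness. Otherwise the common edges form a matching, and the involution exchanging the
  ends of every common edge is an isomorphism.
\<close>

lemma girth_le_length: "is_cycle H cs \<Longrightarrow> girth H \<le> enat (length cs)"
  unfolding girth_def by (rule INF_lower) simp

lemma bipartitions_agree_or_swap:
  assumes "\<And>s t. s \<in> T \<Longrightarrow> t \<in> T \<Longrightarrow> (P s \<longleftrightarrow> P t) \<longleftrightarrow> (Q s \<longleftrightarrow> Q t)"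
  shows "(\<forall>t\<in>T. P t \<longleftrightarrow> Q t) \<or> (\<forall>t\<in>T. P t \<longleftrightarrow> \<not> Q t)"
  using assms by blast

definition common_square_nbrs :: "('a \<Rightarrow> 'a \<Rightarrow> bool) \<Rightarrow> 'a \<Rightarrow> 'a \<Rightarrow> 'a set" where
  "common_square_nbrs H u v =
     {z. z \<noteq> u \<and> z \<noteq> v \<and> graph_square H z u \<and> graph_square H z v}"

locale girth6_graph =
  fixes H :: "'a \<Rightarrow> 'a \<Rightarrow> bool"
  assumes sym: "H x y \<Longrightarrow> H y x"
    and irrefl [simp]: "\<not> H x x"
    and girth_ge_6: "6 \<le> girth H"
begin

lemma no_short_cycle: "is_cycle H cs \<Longrightarrow> length cs < 6 \<Longrightarrow> False"
  using girth_ge_6 girth_le_length[of H cs]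
  by (metis enat_ord_simps(1) leD numeral_eq_enat order_trans)

lemma no_triangle: "H a b \<Longrightarrow> H b c \<Longrightarrow> H c a \<Longrightarrow> False"
  by (rule no_short_cycle[of "[a, b, c]"]) (auto simp: is_cycle_def less_Suc_eq)

lemma no_4_cycle: "H a b \<Longrightarrow> H b c \<Longrightarrow> H c d \<Longrightarrow> H d a \<Longrightarrow> a \<noteq> c \<Longrightarrow> b \<noteq> d \<Longrightarrow> False"
  by (rule no_short_cycle[of "[a, b, c, d]"]) (auto simp: is_cycle_def less_Suc_eq)

lemma no_5_cycle:
  "H a b \<Longrightarrow> H b c \<Longrightarrow> H c d \<Longrightarrow> H d e \<Longrightarrow> H e a \<Longrightarrow> distinct [a, b, c, d, e] \<Longrightarrow> False"
  by (rule no_short_cycle[of "[a, b, c, d, e]"]) (auto simp: is_cycle_def less_Suc_eq)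

lemma square_common_nbr_adjacent:
  assumes xy: "H x y" and "w \<noteq> x" "w \<noteq> y"
    and wx: "graph_square H w x" and wy: "graph_square H w y"
  shows "H x w \<or> H y w"
proof (rule ccontr)
  assume not_adj: "\<not> (H x w \<or> H y w)"
  then have "\<not> H w x" "\<not> H w y" using sym by blast+
  then obtain a b where a: "H w a" "H a x" and b: "H w b" "H b y"
    using wx wy unfolding graph_square_def by blast
  show False
  proof (cases "a = b")
    case True
    then show False using no_triangle[OF xy] a b sym by metis
  next
    case False
    then have "distinct [x, a, w, b, y]"
      using a b xy not_adj \<open>w \<noteq> x\<close> \<open>w \<noteq> y\<close> sym by auto
    then show False using no_5_cycle a b xy sym by metis
  qed
qed

lemma mem_common_square_nbrs:
  assumes "H u v"
  shows "z \<in> common_square_nbrs H u v \<longleftrightarrow> z \<noteq> u \<and> z \<noteq> v \<and> (H u z \<or> H v z)"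
proof
  assume "z \<in> common_square_nbrs H u v"
  then show "z \<noteq> u \<and> z \<noteq> v \<and> (H u z \<or> H v z)"
    using square_common_nbr_adjacent[OF assms] unfolding common_square_nbrs_def by blast
next
  assume "z \<noteq> u \<and> z \<noteq> v \<and> (H u z \<or> H v z)"
  then show "z \<in> common_square_nbrs H u v"
    using assms sym unfolding common_square_nbrs_def graph_square_def by blast
qed

lemma adjacent_iff_common_square_nbr:
  assumes "H x y" "w \<noteq> x" "w \<noteq> y"
  shows "H y w \<longleftrightarrow> w \<in> common_square_nbrs H x y \<and> \<not> H x w"
  using assms mem_common_square_nbrs[OF assms(1)] no_triangle sym by blast

lemma not_square_across_edge:
  assumes xy: "H x y" and xa: "H x a" and yb: "H y b" and "a \<noteq> y" "b \<noteq> x"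
  shows "\<not> graph_square H a b"
proof
  assume ab: "graph_square H a b"
  show False
  proof (cases "H a b")
    case True
    then show False using no_4_cycle[of a x y b] xa xy yb \<open>a \<noteq> y\<close> \<open>b \<noteq> x\<close> sym by metis
  next
    case False
    then obtain z where z: "H a z" "H z b" "a \<noteq> b" using ab unfolding graph_square_def by blast
    show False
    proof (cases "z = x \<or> z = y")
      case True
      then show False using z xy xa yb no_triangle sym by metis
    next
      case False
      then have "distinct [a, x, y, b, z]" using z xy xa yb \<open>a \<noteq> y\<close> \<open>b \<noteq> x\<close> by auto
      then show False using no_5_cycle z xy xa yb sym by metis
    qed
  qed
qed

lemma square_within_common_square_nbrs:
  assumes uv: "H u v" and s: "s \<in> common_square_nbrs H u v" and t: "t \<in> common_square_nbrs H u v"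
    and "s \<noteq> t"
  shows "graph_square H s t \<longleftrightarrow> (H u s \<longleftrightarrow> H u t)"
proof -
  have s': "s \<noteq> u" "s \<noteq> v" "H u s \<or> H v s" and t': "t \<noteq> u" "t \<noteq> v" "H u t \<or> H v t"
    using s t mem_common_square_nbrs[OF uv] by auto
  show ?thesis
  proof (cases "H u s \<longleftrightarrow> H u t")
    case True
    then have "(H u s \<and> H u t) \<or> (H v s \<and> H v t)" using s' t' by blast
    then show ?thesis using True \<open>s \<noteq> t\<close> sym unfolding graph_square_def by metis
  next
    case False
    then have "(H u s \<and> H v t) \<or> (H v s \<and> H u t)" using s' t' by blast
    then have "\<not> graph_square H s t"
      using not_square_across_edge[OF uv] not_square_across_edge[OF sym[OF uv]] s' t' by blast
    with False show ?thesis by blast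
  qed
qed

end

locale common_square = G1: girth6_graph H1 + G2: girth6_graph H2
  for H1 H2 :: "'a \<Rightarrow> 'a \<Rightarrow> bool" +
  assumes same_square: "graph_square H1 = graph_square H2"
begin

lemma common_square_swap: "common_square H2 H1"
  by (simp add: common_square_def common_square_axioms_def same_square G1.girth6_graph_axioms
      G2.girth6_graph_axioms)

lemma same_common_square_nbrs: "common_square_nbrs H1 = common_square_nbrs H2"
  unfolding common_square_nbrs_def same_square ..

lemma equal_nbhd_propagates:
  assumes xy: "H1 x y" and eq: "H1 x = H2 x"
  shows "H1 y = H2 y"
proof
  fix w
  have xy2: "H2 x y" using xy eq by metis
  show "H1 y w = H2 y w"
  proof (cases "w = x \<or> w = y")
    case True
    then show ?thesis using xy xy2 G1.sym G2.sym by auto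
  next
    case False
    then show ?thesis
      using G1.adjacent_iff_common_square_nbr[OF xy] G2.adjacent_iff_common_square_nbr[OF xy2]
        same_common_square_nbrs eq by simp
  qed
qed

lemma equal_nbhds_if_connected:
  assumes conn: "connected_graph V H1" and "v \<in> V" "H1 v = H2 v" and "x \<in> V"
  shows "H1 x = H2 x"
proof -
  have "H1\<^sup>*\<^sup>* v x" using conn \<open>v \<in> V\<close> \<open>x \<in> V\<close> unfolding connected_graph_def by blast
  then show ?thesis
    by (induction rule: rtranclp_induct) (use \<open>H1 v = H2 v\<close> equal_nbhd_propagates in blast)+
qed

lemma swap_across_common_edge:
  assumes uv1: "H1 u v" and uv2: "H2 u v" and ne: "H1 u \<noteq> H2 u"
    and "w \<noteq> u" "w \<noteq> v"
  shows "H2 u w \<longleftrightarrow> H1 v w"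
proof -
  let ?C = "common_square_nbrs H1 u v"
  have C2: "?C = common_square_nbrs H2 u v" using same_common_square_nbrs by simp
  have "(H1 u s \<longleftrightarrow> H1 u t) \<longleftrightarrow> (H2 u s \<longleftrightarrow> H2 u t)" if "s \<in> ?C" "t \<in> ?C" for s t
    using that G1.square_within_common_square_nbrs[OF uv1 that]
      G2.square_within_common_square_nbrs[OF uv2, of s t] C2 same_square
    by (cases "s = t") auto
  then consider "\<forall>t\<in>?C. H1 u t \<longleftrightarrow> H2 u t" | "\<forall>t\<in>?C. H1 u t \<longleftrightarrow> \<not> H2 u t"
    using bipartitions_agree_or_swap[of ?C] by blast
  then show ?thesis
  proof cases
    case 1
    have "H1 u z = H2 u z" for z
      using 1 uv1 uv2 G1.mem_common_square_nbrs[OF uv1, of z]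
        G2.mem_common_square_nbrs[OF uv2, of z] C2 by auto
    with ne show ?thesis by blast
  next
    case 2
    then show ?thesis
      using \<open>w \<noteq> u\<close> \<open>w \<noteq> v\<close> G1.mem_common_square_nbrs[OF uv1, of w]
        G2.mem_common_square_nbrs[OF uv2, of w] C2 G1.no_triangle[OF uv1] G1.sym by metis
  qed
qed

end

definition common_partner :: "('a \<Rightarrow> 'a \<Rightarrow> bool) \<Rightarrow> ('a \<Rightarrow> 'a \<Rightarrow> bool) \<Rightarrow> 'a \<Rightarrow> 'a" where
  "common_partner H1 H2 x = (if \<exists>y. H1 x y \<and> H2 x y then THE y. H1 x y \<and> H2 x y else x)"

lemma common_partner_commute: "common_partner H2 H1 = common_partner H1 H2"
proof -
  have "(\<lambda>y. H2 x y \<and> H1 x y) = (\<lambda>y. H1 x y \<and> H2 x y)" for x by auto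
  then show ?thesis unfolding common_partner_def by (simp only:)
qed

lemma common_partner_unmatched: "\<nexists>y. H1 x y \<and> H2 x y \<Longrightarrow> common_partner H1 H2 x = x"
  unfolding common_partner_def by auto

context common_square
begin

lemma common_edge_unique:
  assumes "H1 x y" "H2 x y" "H1 x z" "H2 x z" and "H1 x \<noteq> H2 x"
  shows "z = y"
proof (rule ccontr)
  assume "z \<noteq> y"
  moreover have "z \<noteq> x" using assms G1.irrefl by metis
  ultimately have "H1 y z" using swap_across_common_edge[of x y z] assms by blast
  then show False using assms G1.no_triangle G1.sym by metis
qed

lemma common_partner_eq:
  assumes "H1 x y" "H2 x y" and "H1 x \<noteq> H2 x"
  shows "common_partner H1 H2 x = y"
proof -
  have "(THE y. H1 x y \<and> H2 x y) = y"
    using assms common_edge_unique by (intro the_equality) blast+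
  then show ?thesis using assms unfolding common_partner_def by auto
qed

context
  fixes f
  defines "f \<equiv> common_partner H1 H2"
  assumes nbhds_differ: "\<And>u v. H1 u v \<Longrightarrow> H2 u v \<Longrightarrow> H1 u \<noteq> H2 u"
begin

lemma partner_swaps:
  assumes "H1 x x'" "H2 x x'" and "w \<noteq> x" "w \<noteq> x'"
  shows "H2 x' w \<longleftrightarrow> H1 x w"
  using swap_across_common_edge[of x' x w] nbhds_differ assms G1.sym G2.sym by blast

lemma partner_hom:
  assumes xy: "H1 x y"
  shows "H2 (f x) (f y)"
proof -
  let ?M = "\<lambda>a b. H1 a b \<and> H2 a b"
  have M_sym: "?M a b \<Longrightarrow> ?M b a" for a b using G1.sym G2.sym by blast
  have fM: "f a = b" if "?M a b" for a b
    using common_partner_eq nbhds_differ that unfolding f_def by blast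
  have fN: "f a = a" if "\<nexists>b. ?M a b" for a
    using that common_partner_unmatched unfolding f_def by metis
  have "x \<noteq> y" using xy G1.irrefl by metis
  show ?thesis
  proof (cases "?M x y")
    case True
    then show ?thesis using fM M_sym by metis
  next
    case not_xy: False
    show ?thesis
    proof (cases "\<exists>x'. ?M x x'"; cases "\<exists>y'. ?M y y'")
      assume "\<exists>x'. ?M x x'" "\<exists>y'. ?M y y'"
      then obtain x' y' where x': "?M x x'" and y': "?M y y'" by blast
      \<comment> \<open>Impossible: \<open>x x' y y'\<close> would be a 4-cycle of \<open>H\<^sub>2\<close>.\<close>
      have "x' \<noteq> y" "y' \<noteq> x" using not_xy x' y' M_sym by blast+
      then have "H2 x' y" "H2 y' x"
        using partner_swaps[of x x' y] partner_swaps[of y y' x] x' y' xy G1.sym \<open>x \<noteq> y\<close> by auto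
      moreover have "x' \<noteq> y'"
        using common_edge_unique[of x' x y] nbhds_differ x' y' M_sym \<open>x \<noteq> y\<close> by metis
      ultimately show ?thesis
        using G2.no_4_cycle[of x x' y y'] x' y' \<open>x \<noteq> y\<close> by blast
    next
      assume "\<exists>x'. ?M x x'" "\<nexists>y'. ?M y y'"
      then obtain x' where x': "?M x x'" by blast
      then have "x' \<noteq> y" using not_xy by blast
      then have "H2 x' y" using partner_swaps[of x x' y] x' xy \<open>x \<noteq> y\<close> by auto
      then show ?thesis using fM[OF x'] fN \<open>\<nexists>y'. ?M y y'\<close> by metis
    next
      assume "\<nexists>x'. ?M x x'" "\<exists>y'. ?M y y'"
      then obtain y' where y': "?M y y'" by blast
      then have "y' \<noteq> x" using not_xy M_sym by blast
      then have "H2 y' x" using partner_swaps[of y y' x] y' xy G1.sym \<open>x \<noteq> y\<close> by auto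
      then show ?thesis using fM[OF y'] fN \<open>\<nexists>x'. ?M x x'\<close> G2.sym by metis
    next
      assume none: "\<nexists>x'. ?M x x'" "\<nexists>y'. ?M y y'"
      have "H2 x y"
      proof (rule ccontr)
        assume "\<not> H2 x y"
        moreover have "graph_square H2 x y"
          using xy \<open>x \<noteq> y\<close> same_square unfolding graph_square_def by metis
        ultimately obtain m where m: "H2 x m" "H2 m y" unfolding graph_square_def by blast
        then have "m \<noteq> x" "m \<noteq> y" by auto
        with m have "m \<in> common_square_nbrs H1 x y"
          using G2.sym unfolding same_common_square_nbrs common_square_nbrs_def graph_square_def
          by blast
        then have "H1 x m \<or> H1 y m" using G1.mem_common_square_nbrs[OF xy] by blast
        then show False using none m G2.sym by blast
      qed
      then show ?thesis using none fN by metis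
    qed
  qed
qed

lemma partner_involution: "f (f x) = x"
proof (cases "\<exists>y. H1 x y \<and> H2 x y")
  case True
  then obtain y where "H1 x y" "H2 x y" by blast
  then show ?thesis
    using common_partner_eq nbhds_differ G1.sym G2.sym unfolding f_def by metis
next
  case False
  then show ?thesis using common_partner_unmatched unfolding f_def by metis
qed

lemma graph_iso_common_partner:
  assumes edges_in_V: "\<And>x y. H1 x y \<Longrightarrow> x \<in> V \<and> y \<in> V"
  shows "graph_iso V H1 H2"
proof -
  have "f x \<in> V" if "x \<in> V" for x
  proof (cases "\<exists>y. H1 x y \<and> H2 x y")
    case True
    then obtain y where "H1 x y" "H2 x y" by blast
    then show ?thesis using common_partner_eq nbhds_differ edges_in_V unfolding f_def by blast
  next
    case False
    then show ?thesis using common_partner_unmatched that unfolding f_def by metis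
  qed
  then have "bij_betw f V V"
    by (intro bij_betw_byWitness[where f' = f]) (auto simp: partner_involution)
  moreover have "H1 (f x) (f y)" if "H2 x y" for x y
  proof -
    have "\<And>u v. H2 u v \<Longrightarrow> H1 u v \<Longrightarrow> H2 u \<noteq> H1 u" using nbhds_differ by metis
    from common_square.partner_hom[OF common_square_swap this that] show ?thesis
      unfolding f_def common_partner_commute[of H1 H2] .
  qed
  then have "H1 x y \<longleftrightarrow> H2 (f x) (f y)" for x y
    using partner_hom partner_involution by metis
  ultimately show ?thesis unfolding graph_iso_def by blast
qed

end

end

theorem theorem1:
  fixes V :: "'a set" and H1 H2 :: "'a \<Rightarrow> 'a \<Rightarrow> bool"
  assumes "finite V"
    and "simple_graph V H1" and "simple_graph V H2"
    and "connected_graph V H1" and "connected_graph V H2"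
    and "girth H1 \<ge> 6" and "girth H2 \<ge> 6"
    and "graph_square H1 = graph_square H2"
  shows "graph_iso V H1 H2"
proof -
  interpret common_square H1 H2
    using assms(2,3,6,7,8) by unfold_locales (auto simp: simple_graph_def)
  show ?thesis
  proof (cases "\<exists>v\<in>V. H1 v = H2 v")
    case True
    then have "\<forall>x\<in>V. H1 x = H2 x" using equal_nbhds_if_connected assms(4) by blast
    then show ?thesis unfolding graph_iso_def by (intro exI[of _ id]) auto
  next
    case False
    moreover have "H1 x y \<Longrightarrow> x \<in> V \<and> y \<in> V" for x y
      using assms(2) unfolding simple_graph_def by blast
    ultimately show ?thesis using graph_iso_common_partner by metis
  qed
qed

end
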